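(* Let $C = c_0c_1\dots c_{m-1}c_0$ and $D=(0)(1)\dots(n-1)(0)$ be reflexive digraph cycles with $D$ non-contractible. Let $\phi \in \mathrm{Hom}(C,D)$ and let $S$ be the vertex set of a subpath of $C$ all of whose edges are stationary under $\phi$, so that $\phi$ maps $S$ to a single vertex $d$ of $D$. Let $\phi'$ be the map that agrees with $\phi$ outside $S$ and maps every vertex of $S$ to $d+1$. If $\phi'$ is a homomorphism, then $\phi$ and $\phi'$ are adjacent in $\mathrm{Hom}(C,D)$ (i.e. $\phi \to \phi'$ or $\phi' \to \phi$).
   Context: A digraph is a binary relation $\to$ on a finite vertex set; $uv$ is an arc if $u\to v$; a loop is an arc $uu$; a digraph is reflexive if every vertex has a loop. A digraph cycle of length $m \geq 3$ is written $c_0c_1\dots c_{m-1}c_0$ (indices mod $m$), meaning its underlying graph is the cycle with edges $c_ic_{i+1}$; each edge may be a forward arc, a backward arc, or both. $D=(0)(1)\dots(n-1)(0)$ has as vertices the integers mod $n$, consecutive integers being adjacent. $D$ is non-contractible if it has length at least $4$ or is a directed $3$-cycle. A homomorphism $\phi:C\to D$ maps vertices so that $u\to v$ implies $\phi(u)\to\phi(v)$. $\mathrm{Hom}(C,D)$ is the digraph on homomorphisms $C \to D$ with $\phi\to\phi'$ iff for all $u \to v$ in $C$, $\phi(u)\to\phi'(v)$. Under $\phi$, an edge $c_ic_{i+1}$ is stationary if $\phi(c_i)=\phi(c_{i+1})$. *)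

theory Defs
  imports Main
begin

text \<open>A reflexive digraph cycle of length m: vertex set {0..<m} (vertex i stands for c_i,
  indices mod m), arc relation R.\<close>
definition refl_dicycle :: "nat \<Rightarrow> (nat \<Rightarrow> nat \<Rightarrow> bool) \<Rightarrow> bool" where
  "refl_dicycle m R \<longleftrightarrow> m \<ge> 3
     \<and> (\<forall>u v. R u v \<longrightarrow> u < m \<and> v < m)
     \<and> (\<forall>u<m. R u u)
     \<and> (\<forall>u<m. \<forall>v<m. u \<noteq> v \<longrightarrow>
          ((R u v \<or> R v u) \<longleftrightarrow> (v = (u + 1) mod m \<or> u = (v + 1) mod m)))"

definition non_contractible :: "nat \<Rightarrow> (nat \<Rightarrow> nat \<Rightarrow> bool) \<Rightarrow> bool" where
  "non_contractible n R \<longleftrightarrow> n \<ge> 4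
     \<or> (n = 3 \<and> ((\<forall>i<n. R i ((i + 1) mod n) \<and> \<not> R ((i + 1) mod n) i)
                 \<or> (\<forall>i<n. R ((i + 1) mod n) i \<and> \<not> R i ((i + 1) mod n))))"

definition is_hom :: "nat \<Rightarrow> (nat \<Rightarrow> nat \<Rightarrow> bool) \<Rightarrow> nat \<Rightarrow> (nat \<Rightarrow> nat \<Rightarrow> bool)
     \<Rightarrow> (nat \<Rightarrow> nat) \<Rightarrow> bool" where
  "is_hom m RC n RD f \<longleftrightarrow> (\<forall>u<m. f u < n) \<and> (\<forall>u v. RC u v \<longrightarrow> RD (f u) (f v))"

definition hom_arc :: "(nat \<Rightarrow> nat \<Rightarrow> bool) \<Rightarrow> (nat \<Rightarrow> nat \<Rightarrow> bool)
     \<Rightarrow> (nat \<Rightarrow> nat) \<Rightarrow> (nat \<Rightarrow> nat) \<Rightarrow> bool" where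
  "hom_arc RC RD f g \<longleftrightarrow> (\<forall>u v. RC u v \<longrightarrow> RD (f u) (g v))"

definition subpath_verts :: "nat \<Rightarrow> nat \<Rightarrow> nat \<Rightarrow> nat set" where
  "subpath_verts m a l = {(a + k) mod m | k. k \<le> l}"

end

theory Submission
  imports Defs
begin

text \<open>For an arc \<open>u \<rightarrow> v\<close> of \<open>C\<close>, the
  condition \<open>\<phi> u \<rightarrow> \<phi>' v\<close> is inherited from \<open>\<phi>\<close> if \<open>v \<notin> S\<close> and from \<open>\<phi>'\<close> if \<open>u \<notin> S\<close>; when
  both ends lie in \<open>S\<close> it reads \<open>d \<rightarrow> d + 1\<close>. Symmetrically \<open>\<phi>' \<rightarrow> \<phi>\<close> only needs
  \<open>d + 1 \<rightarrow> d\<close>. As \<open>d\<close> and \<open>d + 1\<close> are adjacent in \<open>D\<close>, one of the two holds.\<close>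

lemma hom_arc_if_agree_outside:
  assumes f: "\<And>u v. RC u v \<Longrightarrow> RD (f u) (f v)"
    and g: "\<And>u v. RC u v \<Longrightarrow> RD (g u) (g v)"
    and agree: "\<And>x. x \<notin> S \<Longrightarrow> f x = g x"
    and f_S: "\<And>x. x \<in> S \<Longrightarrow> f x = d"
    and g_S: "\<And>x. x \<in> S \<Longrightarrow> g x = e"
    and "RD d e"
  shows "hom_arc RC RD f g"
  unfolding hom_arc_def
proof (intro allI impI)
  fix u v
  assume uv: "RC u v"
  consider "v \<notin> S" | "u \<notin> S" | "u \<in> S" "v \<in> S" by blast
  then show "RD (f u) (g v)"
  proof cases
    case 1
    then show ?thesis using f[OF uv] agree by simp
  next
    case 2
    then show ?thesis using g[OF uv] agree by simp
  qed (simp add: f_S g_S \<open>RD d e\<close>)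
qed

lemma stationary_subpath_const:
  assumes "a < m"
    and stat: "\<forall>k<l. \<phi> ((a + k) mod m) = \<phi> ((a + k + 1) mod m)"
    and "x \<in> subpath_verts m a l"
  shows "\<phi> x = \<phi> a"
proof -
  obtain k where k: "k \<le> l" and x: "x = (a + k) mod m"
    using \<open>x \<in> subpath_verts m a l\<close> unfolding subpath_verts_def by blast
  have "\<phi> ((a + k) mod m) = \<phi> a" using k
  proof (induction k)
    case 0
    then show ?case using \<open>a < m\<close> by simp
  next
    case (Suc k)
    then show ?case using stat by (metis Suc_le_lessD add_Suc_right Suc_eq_plus1 less_imp_le)
  qed
  then show ?thesis unfolding x .
qed

lemma refl_dicycle_succ_adjacent:
  assumes "refl_dicycle n R" and "d < n"
  shows "R d ((d + 1) mod n) \<or> R ((d + 1) mod n) d"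
proof -
  have "n \<ge> 3" using assms(1) unfolding refl_dicycle_def by blast
  then have "d \<noteq> (d + 1) mod n" using \<open>d < n\<close> by (cases "d + 1 = n") auto
  moreover have "(d + 1) mod n < n" using \<open>n \<ge> 3\<close> by simp
  ultimately show ?thesis using assms unfolding refl_dicycle_def by blast
qed

theorem lemma2p1:
  fixes m n :: nat and RC RD :: "nat \<Rightarrow> nat \<Rightarrow> bool" and \<phi> :: "nat \<Rightarrow> nat"
    and a l :: nat
  assumes C: "refl_dicycle m RC"
    and D: "refl_dicycle n RD"
    and nc: "non_contractible n RD"
    and hom: "is_hom m RC n RD \<phi>"
    and a: "a < m" and l: "l < m"
    and stat: "\<forall>k<l. \<phi> ((a + k) mod m) = \<phi> ((a + k + 1) mod m)"
    and hom': "is_hom m RC n RD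
                 (\<lambda>x. if x \<in> subpath_verts m a l then (\<phi> a + 1) mod n else \<phi> x)"
  shows "hom_arc RC RD \<phi> (\<lambda>x. if x \<in> subpath_verts m a l then (\<phi> a + 1) mod n else \<phi> x)
       \<or> hom_arc RC RD (\<lambda>x. if x \<in> subpath_verts m a l then (\<phi> a + 1) mod n else \<phi> x) \<phi>"
    (is "hom_arc RC RD \<phi> ?\<phi>' \<or> hom_arc RC RD ?\<phi>' \<phi>")
proof -
  let ?S = "subpath_verts m a l" and ?d = "\<phi> a"
  have \<phi>_S: "\<phi> x = ?d" if "x \<in> ?S" for x
    using stationary_subpath_const[OF a stat that] .
  have \<phi>'_S: "?\<phi>' x = (?d + 1) mod n" if "x \<in> ?S" for x
    using that by simp
  have agree: "\<phi> x = ?\<phi>' x" if "x \<notin> ?S" for x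
    using that by simp
  have arcs: "RD (\<phi> u) (\<phi> v)" "RD (?\<phi>' u) (?\<phi>' v)" if "RC u v" for u v
    using hom hom' that unfolding is_hom_def by blast+
  have "?d < n" using hom a unfolding is_hom_def by blast
  then consider "RD ?d ((?d + 1) mod n)" | "RD ((?d + 1) mod n) ?d"
    using refl_dicycle_succ_adjacent[OF D] by blast
  then show ?thesis
  proof cases
    case 1
    have "hom_arc RC RD \<phi> ?\<phi>'"
      by (rule hom_arc_if_agree_outside[where S = ?S]) (use arcs agree \<phi>_S \<phi>'_S 1 in auto)
    then show ?thesis ..
  next
    case 2
    have "hom_arc RC RD ?\<phi>' \<phi>"
      by (rule hom_arc_if_agree_outside[where S = ?S]) (use arcs agree \<phi>_S \<phi>'_S 2 in auto)
    then show ?thesis ..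
  qed
qed

end
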